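(* Let $n$ be any positive integer. There exists a 2-layer transformer, with a suitable position embedding, that performs function evaluation for domain $[n]$ in the "consecutive positions, permuted keys" presentation. That is, for every $f:[n]\to[n]$, every permutation $\pi$ of $[n]$ and every $i^*\in[n]$, on the input $\pi(0),f(\pi(0)),\pi(1),f(\pi(1)),\dots,\pi(n-1),f(\pi(n-1)),i^*$ of length $2n+1$, it outputs $f(i^* )$. The transformer uses leftmost hard attention, one head per attention layer, embedding dimension $7$, $O(\log n)$ bits of precision, a residual connection in the first attention layer, and no MLP layer.
   Context: Notation: $[n]=\{0,\dots,n-1\}$. Transformer model (encoder-only, no masking, no layer normalization). A transformer of embedding dimension $d$ consists of three parts. - An input embedding sends position $i$ with token $x_i$ to $\mathbf{w}(x_i)+\mathbf{p}(i)\in\mathbb{R}^d$. The token embedding $\mathbf{w}$ and the position embedding $\mathbf{p}$ may be chosen freely. - Length-preserving layers follow. - The output is the index in $[n]$ maximizing $\mathbf{U}\mathbf{Y}[L-1]$, where $\mathbf{U}\in\mathbb{R}^{n\times d}$ and $\mathbf{Y}[L-1]$ is the final layer's vector at the last position. A single-head attention layer has $\mathbf{W}^Q,\mathbf{W}^K\in\mathbb{R}^{d_{hid}\times d}$ and $\mathbf{W}^V\in\mathbb{R}^{d\times d}$. It computes the scores $s[i,j]=(\mathbf{W}^Q\mathbf{X}[i])\cdot(\mathbf{W}^K\mathbf{X}[j])/\sqrt{d_{hid}}$. - In leftmost hard attention, $\alpha[i,j]=1$ for the smallest $j$ maximizing $s[i,j]$, and $0$ otherwise. - The layer output is $\sum_j\alpha[i,j]\mathbf{W}^V\mathbf{X}[j]$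 without a residual, or $\mathbf{X}[i]+\sum_j\alpha[i,j]\mathbf{W}^V\mathbf{X}[j]$ with a residual. A $k$-layer transformer has $k$ attention layers and any number of position-wise ReLU MLP layers. *)

theory Defs
  imports Complex_Main
begin

text \<open>Vectors in R^d are functions nat => real of which only coordinates < d matter;
  matrices are functions nat => nat => real (row, column).\<close>

type_synonym vec = "nat \<Rightarrow> real"
type_synonym mat = "nat \<Rightarrow> nat \<Rightarrow> real"

definition mv :: "nat \<Rightarrow> mat \<Rightarrow> vec \<Rightarrow> vec" where
  "mv d M x = (\<lambda>r. \<Sum>c<d. M r c * x c)"

definition dotp :: "nat \<Rightarrow> vec \<Rightarrow> vec \<Rightarrow> real" where
  "dotp m x y = (\<Sum>r<m. x r * y r)"

text \<open>A single-head attention layer: hidden dimension d_hid, W^Q, W^K (d_hid x d), W^V (d x d).\<close>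
record attn =
  dh :: nat
  WQ :: mat
  WK :: mat
  WV :: mat

definition score :: "nat \<Rightarrow> attn \<Rightarrow> (nat \<Rightarrow> vec) \<Rightarrow> nat \<Rightarrow> nat \<Rightarrow> real" where
  "score d L X i j =
     dotp (dh L) (mv d (WQ L) (X i)) (mv d (WK L) (X j)) / sqrt (real (dh L))"

definition hard_alpha :: "nat \<Rightarrow> (nat \<Rightarrow> nat \<Rightarrow> real) \<Rightarrow> nat \<Rightarrow> nat \<Rightarrow> real" where
  "hard_alpha N s i j =
     (if j = (LEAST j'. j' < N \<and> (\<forall>j''<N. s i j'' \<le> s i j')) then 1 else 0)"

definition attn_layer :: "nat \<Rightarrow> attn \<Rightarrow> bool \<Rightarrow> nat \<Rightarrow> (nat \<Rightarrow> vec) \<Rightarrow> nat \<Rightarrow> vec" where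
  "attn_layer d L res N X i =
     (\<lambda>r. (if res then X i r else 0) +
          (\<Sum>j<N. hard_alpha N (score d L X) i j * mv d (WV L) (X j) r))"

definition embed :: "(nat \<Rightarrow> vec) \<Rightarrow> (nat \<Rightarrow> vec) \<Rightarrow> (nat \<Rightarrow> nat) \<Rightarrow> nat \<Rightarrow> vec" where
  "embed w pe xs k = (\<lambda>r. w (xs k) r + pe k r)"

definition fe_input :: "nat \<Rightarrow> (nat \<Rightarrow> nat) \<Rightarrow> (nat \<Rightarrow> nat) \<Rightarrow> nat \<Rightarrow> nat \<Rightarrow> nat" where
  "fe_input n f \<pi> istar k =
     (if k = 2 * n then istar
      else if even k then \<pi> (k div 2) else f (\<pi> (k div 2)))"

text \<open>Fixed-point number with p fractional bits and 2p bits in total (plus sign):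
  x = k / 2^p with |k| < 2^(2p).  "O(log n) bits" is rendered as p \<le> C log2(n+1).\<close>
definition fixp :: "nat \<Rightarrow> real \<Rightarrow> bool" where
  "fixp p x \<longleftrightarrow> (\<exists>k::int. x = real_of_int k / 2 ^ p \<and> \<bar>k\<bar> < 2 ^ (2 * p))"

definition attn_params_prec :: "nat \<Rightarrow> nat \<Rightarrow> attn \<Rightarrow> bool" where
  "attn_params_prec p d L \<longleftrightarrow>
     (\<forall>a<dh L. \<forall>c<d. fixp p (WQ L a c) \<and> fixp p (WK L a c)) \<and>
     (\<forall>a<d. \<forall>c<d. fixp p (WV L a c))"

definition attn_comp_prec :: "nat \<Rightarrow> nat \<Rightarrow> attn \<Rightarrow> bool \<Rightarrow> nat \<Rightarrow> (nat \<Rightarrow> vec) \<Rightarrow> bool" where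
  "attn_comp_prec p d L res N X \<longleftrightarrow>
     (\<forall>i<N. (\<forall>a<dh L. fixp p (mv d (WQ L) (X i) a) \<and> fixp p (mv d (WK L) (X i) a)) \<and>
            (\<forall>r<d. fixp p (mv d (WV L) (X i) r) \<and> fixp p (attn_layer d L res N X i r)) \<and>
            (\<forall>j<N. fixp p (score d L X i j)))"

end

theory Submission
  imports Defs
begin

(* Write q for the queried key i*.  Layer 1 makes every position i attend to position i + 1 (the
   last position attends to itself): with the positional features i and i^2 its score is
   2(i+1)j - j^2 = (i+1)^2 - (j-(i+1))^2, uniquely maximal there.  Through the residual connection
   the key position 2k then carries both pi k and f (pi k).  Layer 2 lets the last position, which
   holds q, attend to the key equal to q: its score 2 q x_j - x_j^2 - [j is not a key position]
   = q^2 - (x_j - q)^2 - [j is not a key position] is uniquely maximal at the key position of q,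
   so f q is copied to the last position.  The readout 2 k (f q) - k^2 = (f q)^2 - (k - f q)^2
   is maximal exactly at k = f q.  Every number that occurs is an integer of size O(n^4), so
   O(log n) bits suffice. *)

section \<open>Leftmost hard attention\<close>

definition hard_argmax :: "nat \<Rightarrow> (nat \<Rightarrow> nat \<Rightarrow> real) \<Rightarrow> nat \<Rightarrow> nat" where
  "hard_argmax N s i = (LEAST j. j < N \<and> (\<forall>j'<N. s i j' \<le> s i j))"

lemma hard_argmax_less:
  assumes "0 < N"
  shows "hard_argmax N s i < N"
proof -
  let ?m = "Max (s i ` {..<N})"
  have "?m \<in> s i ` {..<N}"
    using assms by (intro Max_in) auto
  then obtain j0 where "j0 < N" "s i j0 = ?m" by auto
  moreover have "s i j' \<le> ?m" if "j' < N" for j'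
    using that by simp
  ultimately have "\<exists>j. j < N \<and> (\<forall>j'<N. s i j' \<le> s i j)" by auto
  then show ?thesis
    unfolding hard_argmax_def by (rule LeastI2_ex) simp
qed

lemma hard_argmax_eqI:
  assumes "j0 < N" and "\<forall>j<N. j \<noteq> j0 \<longrightarrow> s i j < s i j0"
  shows "hard_argmax N s i = j0"
  unfolding hard_argmax_def
proof (rule Least_equality)
  show "j0 < N \<and> (\<forall>j'<N. s i j' \<le> s i j0)"
    using assms by (metis less_eq_real_def)
next
  fix j assume "j < N \<and> (\<forall>j'<N. s i j' \<le> s i j)"
  then show "j0 \<le> j" using assms by (metis not_less order.refl)
qed

lemma attn_layer_hard_argmax:
  assumes "0 < N"
  shows "attn_layer d L res N X i r =
    (if res then X i r else 0) + mv d (WV L) (X (hard_argmax N (score d L X) i)) r"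
proof -
  let ?m = "hard_argmax N (score d L X) i"
  have "hard_alpha N (score d L X) i = (\<lambda>j. of_bool (j = ?m))"
    by (simp add: hard_alpha_def hard_argmax_def fun_eq_iff)
  moreover have "{..<N} \<inter> {j. j = ?m} = {?m}"
    using hard_argmax_less[OF assms] by auto
  ultimately show ?thesis
    by (simp add: attn_layer_def)
qed

lemma score_eq_dotp_scaled_query:
  "score d L X i j = dotp (dh L) (mv d (\<lambda>a c. WQ L a c / sqrt (dh L)) (X i)) (mv d (WK L) (X j))"
proof -
  have "mv d (\<lambda>a c. WQ L a c / sqrt (dh L)) (X i) = (\<lambda>a. mv d (WQ L) (X i) a / sqrt (dh L))"
    by (simp add: mv_def sum_divide_distrib fun_eq_iff)
  then show ?thesis
    by (simp add: score_def dotp_def sum_divide_distrib)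
qed

section \<open>Integer computations need few bits\<close>

definition int_bounded :: "real \<Rightarrow> real \<Rightarrow> bool" where
  "int_bounded B x \<longleftrightarrow> x \<in> \<int> \<and> \<bar>x\<bar> \<le> B"

definition int_rows_bounded :: "nat \<Rightarrow> nat \<Rightarrow> real \<Rightarrow> mat \<Rightarrow> bool" where
  "int_rows_bounded m d K M \<longleftrightarrow> (\<forall>a<m. (\<forall>c<d. M a c \<in> \<int>) \<and> (\<Sum>c<d. \<bar>M a c\<bar>) \<le> K)"

lemma fixp_of_int:
  assumes "x \<in> \<int>" and "\<bar>x\<bar> < 2 ^ p"
  shows "fixp p x"
proof -
  obtain m where m: "x = of_int m" using assms(1) Ints_cases by blast
  have "\<bar>real_of_int m\<bar> < 2 ^ p" using assms m by simp
  then have mb: "\<bar>m\<bar> < 2 ^ p" by (metis of_int_abs of_int_less_iff of_int_numeral of_int_power)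
  have "\<bar>m * 2 ^ p\<bar> = \<bar>m\<bar> * 2 ^ p" by (simp add: abs_mult)
  also have "\<dots> < 2 ^ p * 2 ^ p" using mb by (intro mult_strict_right_mono) auto
  also have "\<dots> = 2 ^ (2 * p)" by (simp add: power_add[symmetric] mult_2)
  finally have "\<bar>m * 2 ^ p\<bar> < 2 ^ (2 * p)" .
  moreover have "x = real_of_int (m * 2 ^ p) / 2 ^ p" using m by simp
  ultimately show ?thesis unfolding fixp_def by blast
qed

lemma fixp_if_int_bounded: "int_bounded B x \<Longrightarrow> B < 2 ^ p \<Longrightarrow> fixp p x"
  unfolding int_bounded_def by (auto intro: fixp_of_int)

lemma int_bounded_add: "int_bounded A x \<Longrightarrow> int_bounded B y \<Longrightarrow> int_bounded (A + B) (x + y)"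
  unfolding int_bounded_def by (auto intro: abs_triangle_ineq[THEN order_trans])

lemma int_bounded_entry:
  assumes "int_rows_bounded m d K M" "a < m" "c < d"
  shows "int_bounded K (M a c)"
proof -
  have "\<bar>M a c\<bar> \<le> (\<Sum>c'<d. \<bar>M a c'\<bar>)"
    using assms(3) by (intro member_le_sum) auto
  then show ?thesis using assms unfolding int_rows_bounded_def int_bounded_def by force
qed

lemma int_bounded_mv:
  assumes M: "int_rows_bounded m d K M" "a < m"
    and x: "\<forall>c<d. int_bounded B (x c)" and B: "0 \<le> B"
  shows "int_bounded (K * B) (mv d M x a)"
proof -
  have "\<bar>mv d M x a\<bar> \<le> (\<Sum>c<d. \<bar>M a c\<bar> * \<bar>x c\<bar>)"
    unfolding mv_def by (rule order_trans[OF sum_abs]) (simp add: abs_mult)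
  also have "\<dots> \<le> (\<Sum>c<d. \<bar>M a c\<bar> * B)"
    using x unfolding int_bounded_def by (intro sum_mono mult_left_mono) auto
  also have "\<dots> \<le> K * B"
    using M B unfolding int_rows_bounded_def
    by (simp add: sum_distrib_right[symmetric] mult_right_mono)
  finally show ?thesis
    using M x unfolding int_rows_bounded_def int_bounded_def mv_def by auto
qed

lemma int_bounded_dotp:
  assumes "\<forall>r<m. int_bounded A (x r)" "\<forall>r<m. int_bounded B (y r)" "0 \<le> A"
  shows "int_bounded (m * (A * B)) (dotp m x y)"
proof -
  have "\<bar>dotp m x y\<bar> \<le> (\<Sum>r<m. \<bar>x r\<bar> * \<bar>y r\<bar>)"
    unfolding dotp_def by (rule order_trans[OF sum_abs]) (simp add: abs_mult)
  also have "\<dots> \<le> (\<Sum>r<m. A * B)"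
    using assms unfolding int_bounded_def by (intro sum_mono mult_mono) auto
  finally show ?thesis
    using assms unfolding int_bounded_def dotp_def by auto
qed

text \<open>Integrality of the rescaled query matrix is what keeps the scores integral.\<close>

definition int_weights :: "real \<Rightarrow> nat \<Rightarrow> attn \<Rightarrow> bool" where
  "int_weights K d L \<longleftrightarrow>
     int_rows_bounded (dh L) d K (WQ L) \<and>
     int_rows_bounded (dh L) d K (\<lambda>a c. WQ L a c / sqrt (dh L)) \<and>
     int_rows_bounded (dh L) d K (WK L) \<and> int_rows_bounded d d K (WV L)"

lemma attn_params_prec_if_int_weights:
  assumes W: "int_weights K d L" and "K < 2 ^ p"
  shows "attn_params_prec p d L"
proof -
  have "fixp p (M a c)" if "int_rows_bounded m d K M" "a < m" "c < d" for m M a c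
    using int_bounded_entry[OF that] \<open>K < 2 ^ p\<close> by (rule fixp_if_int_bounded)
  then show ?thesis
    using W unfolding int_weights_def attn_params_prec_def by blast
qed

lemma attn_comp_prec_if_int_weights:
  fixes K B :: real
  assumes W: "int_weights K d L" and X: "\<forall>i<N. \<forall>r<d. int_bounded B (X i r)"
    and "0 < N" "0 \<le> K" "0 \<le> B"
    and out_bound: "(1 + K) * B < 2 ^ p" and score_bound: "dh L * (K * B)^2 < 2 ^ p"
  shows "attn_comp_prec p d L res N X"
proof -
  have KB: "K * B < 2 ^ p"
    using out_bound \<open>0 \<le> B\<close> by (simp add: algebra_simps)
  have mv_bound: "int_bounded (K * B) (mv d M (X i) a)"
    if "int_rows_bounded m d K M" "a < m" "i < N" for m M a i
    using that(1,2) X that(3) \<open>0 \<le> B\<close> by (intro int_bounded_mv) auto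
  have mv_prec: "fixp p (mv d M (X i) a)"
    if "int_rows_bounded m d K M" "a < m" "i < N" for m M a i
    using mv_bound[OF that] KB by (rule fixp_if_int_bounded)
  have out_prec: "fixp p (attn_layer d L res N X i r)" if "i < N" "r < d" for i r
  proof -
    have "int_bounded (K * B) (mv d (WV L) (X (hard_argmax N (score d L X) i)) r)"
      using W \<open>r < d\<close> hard_argmax_less[OF \<open>0 < N\<close>] unfolding int_weights_def
      by (blast intro: mv_bound)
    moreover have "int_bounded B (if res then X i r else 0)"
      using X that \<open>0 \<le> B\<close> by (simp add: int_bounded_def)
    ultimately have "int_bounded (B + K * B) (attn_layer d L res N X i r)"
      unfolding attn_layer_hard_argmax[OF \<open>0 < N\<close>] by (metis add.commute int_bounded_add)
    then show ?thesis
      using out_bound by (intro fixp_if_int_bounded) (auto simp: algebra_simps)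
  qed
  have score_prec: "fixp p (score d L X i j)" if "i < N" "j < N" for i j
  proof -
    have "\<forall>a<dh L. int_bounded (K * B) (mv d (\<lambda>a c. WQ L a c / sqrt (dh L)) (X i) a)"
      "\<forall>a<dh L. int_bounded (K * B) (mv d (WK L) (X j) a)"
      using W that unfolding int_weights_def by (blast intro: mv_bound)+
    then have "int_bounded (dh L * (K * B * (K * B))) (score d L X i j)"
      unfolding score_eq_dotp_scaled_query using \<open>0 \<le> K\<close> \<open>0 \<le> B\<close>
      by (intro int_bounded_dotp) auto
    then show ?thesis
      using score_bound by (intro fixp_if_int_bounded) (auto simp: power2_eq_square)
  qed
  show ?thesis
    using W unfolding attn_comp_prec_def int_weights_def
    by (blast intro: mv_prec out_prec score_prec)
qed

section \<open>The two-layer construction\<close>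

text \<open>Coordinates of the residual stream: 0 the constant 1, 1 and 2 the token x and x^2, 3 and 4
  the position k and k^2, 5 the token at the next position (written by layer 1), 6 a flag for the
  positions that are not keys.\<close>

definition WQ1 :: mat where
  "WQ1 a c = (if a = 0 \<and> (c = 0 \<or> c = 3) then 4 else if a = 1 \<and> c = 0 then -2 else 0)"
definition WK1 :: mat where
  "WK1 a c = (if a = 0 \<and> c = 3 then 1 else if a = 1 \<and> c = 4 then 1 else 0)"
definition WV1 :: mat where
  "WV1 a c = (if a = 5 \<and> c = 1 then 1 else 0)"
definition WQ2 :: mat where
  "WQ2 a c = (if a = 0 \<and> c = 1 then 4 else if (a = 1 \<or> a = 2) \<and> c = 0 then -2 else 0)"
definition WK2 :: mat where
  "WK2 a c = (if a = 0 \<and> c = 1 \<or> a = 1 \<and> c = 2 \<or> a = 2 \<and> c = 6 then 1 else 0)"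
definition WV2 :: mat where
  "WV2 a c = (if a = 0 \<and> c = 5 then 1 else if a = 1 \<and> c = 0 then 1 else 0)"

definition layer1 :: attn where "layer1 = \<lparr>dh = 4, WQ = WQ1, WK = WK1, WV = WV1\<rparr>"
definition layer2 :: attn where "layer2 = \<lparr>dh = 4, WQ = WQ2, WK = WK2, WV = WV2\<rparr>"

lemma int_weights_layer1: "int_weights 8 7 layer1"
  by (simp add: int_weights_def int_rows_bounded_def layer1_def WQ1_def WK1_def WV1_def
      eval_nat_numeral less_Suc_eq all_conj_distrib)

lemma int_weights_layer2: "int_weights 8 7 layer2"
  by (simp add: int_weights_def int_rows_bounded_def layer2_def WQ2_def WK2_def WV2_def
      eval_nat_numeral less_Suc_eq all_conj_distrib)

lemma score_layer1: "score 7 layer1 X i j = 2 * (X i 0 + X i 3) * X j 3 - X i 0 * X j 4"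
  by (simp add: score_def layer1_def dotp_def mv_def WQ1_def WK1_def eval_nat_numeral field_simps)

lemma score_layer2: "score 7 layer2 X i j = 2 * X i 1 * X j 1 - X i 0 * X j 2 - X i 0 * X j 6"
  by (simp add: score_def layer2_def dotp_def mv_def WQ2_def WK2_def eval_nat_numeral field_simps)

lemma value_layer1: "mv 7 (WV layer1) v = (\<lambda>r. if r = 5 then v 1 else 0)"
  by (simp add: layer1_def mv_def WV1_def eval_nat_numeral fun_eq_iff)

lemma value_layer2: "mv 7 (WV layer2) v = (\<lambda>r. if r = 0 then v 5 else if r = 1 then v 0 else 0)"
  by (simp add: layer2_def mv_def WV2_def eval_nat_numeral fun_eq_iff)

definition tok_emb :: "nat \<Rightarrow> vec" where
  "tok_emb x = (\<lambda>r. if r = 1 then real x else if r = 2 then real x ^ 2 else 0)"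

definition pos_emb :: "nat \<Rightarrow> nat \<Rightarrow> vec" where
  "pos_emb n k = (\<lambda>r. if r = 0 then 1 else if r = 3 then real k else if r = 4 then real k ^ 2
     else if r = 6 \<and> (odd k \<or> k = 2 * n) then 1 else 0)"

definition unembed :: mat where
  "unembed k r = (if r = 0 then 2 * real k else if r = 1 then - (real k ^ 2) else 0)"

definition entry_bound :: "nat \<Rightarrow> real" where
  "entry_bound n = (2 * real n + 1) ^ 2"

lemma one_le_entry_bound: "1 \<le> entry_bound n"
  unfolding entry_bound_def by (simp add: one_le_power)

lemma int_bounded_small_nat:
  assumes "k \<le> 2 * n"
  shows "int_bounded (entry_bound n) (real k)" "int_bounded (entry_bound n) (real k ^ 2)"
proof -
  have "real k ^ 2 \<le> entry_bound n"
    unfolding entry_bound_def using assms by (intro power_mono) auto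
  moreover have "real k \<le> real k ^ 2"
    by (cases "k = 0") (auto intro: self_le_power)
  ultimately have "real k \<le> entry_bound n" by linarith
  with \<open>real k ^ 2 \<le> entry_bound n\<close>
  show "int_bounded (entry_bound n) (real k)" "int_bounded (entry_bound n) (real k ^ 2)"
    unfolding int_bounded_def by auto
qed

lemma int_bounded_unembed:
  assumes "k < n"
  shows "int_bounded (entry_bound n) (unembed k r)"
  using int_bounded_small_nat[of k n] int_bounded_small_nat[of "2 * k" n] one_le_entry_bound[of n]
    assms unfolding unembed_def int_bounded_def by auto

lemma int_bounded_tok_emb: "x \<le> 2 * n \<Longrightarrow> int_bounded (entry_bound n) (tok_emb x r)"
  using int_bounded_small_nat[of x n] one_le_entry_bound[of n]
  unfolding tok_emb_def by (auto simp: int_bounded_def)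

lemma int_bounded_pos_emb: "k \<le> 2 * n \<Longrightarrow> int_bounded (entry_bound n) (pos_emb n k r)"
  using int_bounded_small_nat[of k n] one_le_entry_bound[of n]
  unfolding pos_emb_def by (auto simp: int_bounded_def)

lemma int_bounded_logit:
  assumes "k < n" "y < n"
  shows "int_bounded (entry_bound n) (real y ^ 2 - (real k - real y) ^ 2)"
proof -
  have "(real k - real y) ^ 2 \<le> entry_bound n"
    unfolding entry_bound_def using assms abs_le_square_iff[of "real k - real y" "2 * real n + 1"]
    by auto
  moreover have "real y ^ 2 \<le> entry_bound n"
    using int_bounded_small_nat(2)[of y n] assms by (simp add: int_bounded_def)
  moreover have "0 \<le> (real k - real y) ^ 2" "0 \<le> real y ^ 2" by simp_all
  ultimately have "\<bar>real y ^ 2 - (real k - real y) ^ 2\<bar> \<le> entry_bound n"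
    unfolding abs_le_iff by linarith
  then show ?thesis
    unfolding int_bounded_def by simp
qed

lemma entry_bound_less_pow2:
  assumes "256 * entry_bound n ^ 2 < 2 ^ p"
  shows "9 * entry_bound n < 2 ^ p"
proof -
  have "entry_bound n \<le> entry_bound n ^ 2"
    using one_le_entry_bound[of n] by (simp add: power2_eq_square)
  with assms one_le_entry_bound[of n] show ?thesis by linarith
qed

section \<open>Correctness on a fixed input\<close>

locale function_evaluation_input =
  fixes n :: nat and f \<pi> :: "nat \<Rightarrow> nat" and istar :: nat
  assumes f_less: "\<forall>x<n. f x < n" and \<pi>_bij: "bij_betw \<pi> {..<n} {..<n}"
    and istar_less: "istar < n"
begin

abbreviation "N \<equiv> 2 * n + 1"
abbreviation "tok \<equiv> fe_input n f \<pi> istar"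

definition "X0 = embed tok_emb (pos_emb n) tok"
definition "X1 = attn_layer 7 layer1 True N X0"
definition "X2 = attn_layer 7 layer2 False N X1"

lemma N_pos: "0 < N"
  by simp

lemma tok_less: "k < N \<Longrightarrow> tok k < n"
  using f_less istar_less \<pi>_bij unfolding fe_input_def bij_betw_def by auto

lemma X0_eq:
  "X0 k r = (if r = 0 then 1 else if r = 1 then real (tok k) else if r = 2 then real (tok k) ^ 2
    else if r = 3 then real k else if r = 4 then real k ^ 2
    else if r = 6 \<and> (odd k \<or> k = 2 * n) then 1 else 0)"
  unfolding X0_def embed_def tok_emb_def pos_emb_def by auto

lemma layer1_attends_next:
  assumes "i < N"
  shows "hard_argmax N (score 7 layer1 X0) i = min (i + 1) (2 * n)"
proof (rule hard_argmax_eqI)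
  show "min (i + 1) (2 * n) < N" by simp
  have score: "score 7 layer1 X0 i j = (real i + 1)^2 - (real j - (real i + 1))^2" for j
    unfolding score_layer1 X0_eq by (simp add: power2_eq_square algebra_simps)
  show "\<forall>j<N. j \<noteq> min (i + 1) (2 * n) \<longrightarrow>
      score 7 layer1 X0 i j < score 7 layer1 X0 i (min (i + 1) (2 * n))"
  proof (intro allI impI)
    fix j assume j: "j < N" "j \<noteq> min (i + 1) (2 * n)"
    have "(real (min (i + 1) (2 * n)) - (real i + 1))^2 < (real j - (real i + 1))^2"
    proof (cases "i < 2 * n")
      case True
      then show ?thesis using j by simp
    next
      case False
      with assms have "i = 2 * n" by simp
      with j have "real j + 2 \<le> real i + 1" by simp
      then have "1 < \<bar>real j - (real i + 1)\<bar>" by simp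
      then have "1 < \<bar>real j - (real i + 1)\<bar> ^ 2" by (rule one_less_power) simp
      with \<open>i = 2 * n\<close> show ?thesis by simp
    qed
    then show "score 7 layer1 X0 i j < score 7 layer1 X0 i (min (i + 1) (2 * n))"
      unfolding score by simp
  qed
qed

lemma X1_eq:
  assumes "k < N"
  shows "X1 k r = (if r = 5 then real (tok (min (k + 1) (2 * n))) else X0 k r)"
  unfolding X1_def attn_layer_hard_argmax[OF N_pos] layer1_attends_next[OF assms] value_layer1
  by (simp add: X0_eq)

lemma layer2_attends_key:
  assumes "k0 < n" and "\<pi> k0 = istar"
  shows "hard_argmax N (score 7 layer2 X1) (2 * n) = 2 * k0"
proof (rule hard_argmax_eqI)
  show "2 * k0 < N" using assms by simp
  have score: "score 7 layer2 X1 (2 * n) j =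
      real istar ^ 2 - (real (tok j) - real istar) ^ 2 - (if odd j \<or> j = 2 * n then 1 else 0)"
    if "j < N" for j
    using that by (simp add: score_layer2 X1_eq X0_eq fe_input_def power2_eq_square algebra_simps)
  show "\<forall>j<N. j \<noteq> 2 * k0 \<longrightarrow> score 7 layer2 X1 (2 * n) j < score 7 layer2 X1 (2 * n) (2 * k0)"
  proof (intro allI impI)
    fix j assume j: "j < N" "j \<noteq> 2 * k0"
    have key: "score 7 layer2 X1 (2 * n) (2 * k0) = real istar ^ 2"
      using score[of "2 * k0"] assms by (simp add: fe_input_def)
    show "score 7 layer2 X1 (2 * n) j < score 7 layer2 X1 (2 * n) (2 * k0)"
    proof (cases "odd j \<or> j = 2 * n")
      case True
      have "0 \<le> (real (tok j) - real istar) ^ 2" by simp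
      then show ?thesis unfolding key score[OF j(1)] if_P[OF True] by linarith
    next
      case False
      then obtain k where k: "j = 2 * k" "k < n" "k \<noteq> k0"
        using j by (auto elim!: evenE)
      then have "tok j \<noteq> istar"
        using \<pi>_bij assms unfolding bij_betw_def inj_on_def by (auto simp: fe_input_def)
      then show ?thesis unfolding key score[OF j(1)] using False by simp
    qed
  qed
qed

lemma X2_last: "X2 (2 * n) = (\<lambda>r. if r = 0 then real (f istar) else if r = 1 then 1 else 0)"
proof -
  obtain k0 where k0: "k0 < n" "\<pi> k0 = istar"
    using \<pi>_bij istar_less unfolding bij_betw_def by (metis imageE lessThan_iff)
  then have "tok (2 * k0 + 1) = f istar" by (simp add: fe_input_def)
  then show ?thesis
    unfolding X2_def attn_layer_hard_argmax[OF N_pos] layer2_attends_key[OF k0] value_layer2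
    using k0 by (simp add: X1_eq X0_eq fun_eq_iff)
qed

lemma logit_eq:
  "(\<Sum>r<7. unembed k r * X2 (2 * n) r) = real (f istar) ^ 2 - (real k - real (f istar)) ^ 2"
  unfolding X2_last by (simp add: unembed_def eval_nat_numeral power2_eq_square algebra_simps)

lemma X0_int_bounded: "k < N \<Longrightarrow> int_bounded (entry_bound n) (X0 k r)"
  using int_bounded_small_nat[of k n] int_bounded_small_nat[of "tok k" n] tok_less[of k]
    one_le_entry_bound[of n]
  unfolding X0_eq by (auto simp: int_bounded_def)

lemma X1_int_bounded:
  assumes "k < N"
  shows "int_bounded (entry_bound n) (X1 k r)"
proof -
  have "tok (min (k + 1) (2 * n)) < n"
    by (rule tok_less) simp
  then have "tok (min (k + 1) (2 * n)) \<le> 2 * n" by simp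
  then show ?thesis
    using int_bounded_small_nat X0_int_bounded[OF assms] unfolding X1_eq[OF assms] by simp
qed

lemma transformer_output:
  assumes prec: "256 * entry_bound n ^ 2 < 2 ^ p"
  shows "let N = 2 * n + 1;
             X0 = embed tok_emb (pos_emb n) (fe_input n f \<pi> istar);
             X1 = attn_layer 7 layer1 True N X0;
             X2 = attn_layer 7 layer2 False N X1;
             logit = (\<lambda>k. \<Sum>r<7. unembed k r * X2 (2 * n) r)
         in (\<forall>k<n. k \<noteq> f istar \<longrightarrow> logit k < logit (f istar)) \<and>
            (\<forall>k<N. \<forall>r<7. fixp p (X0 k r)) \<and>
            attn_comp_prec p 7 layer1 True N X0 \<and>
            attn_comp_prec p 7 layer2 False N X1 \<and>
            (\<forall>k<n. fixp p (logit k))"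
proof -
  let ?B = "entry_bound n"
  have bits: "?B < 2 ^ p" "(1 + 8) * ?B < 2 ^ p" "4 * (8 * ?B) ^ 2 < 2 ^ p"
    using prec entry_bound_less_pow2[OF prec] one_le_entry_bound[of n]
    by (simp_all add: power_mult_distrib)
  have dh: "dh layer1 = 4" "dh layer2 = 4"
    by (simp_all add: layer1_def layer2_def)
  have "attn_comp_prec p 7 layer1 True N X0" "attn_comp_prec p 7 layer2 False N X1"
    using X0_int_bounded X1_int_bounded one_le_entry_bound[of n] bits dh
    by (auto intro!: attn_comp_prec_if_int_weights int_weights_layer1 int_weights_layer2)
  moreover have "fixp p (X0 k r)" if "k < N" for k r
    using X0_int_bounded[OF that] bits(1) by (rule fixp_if_int_bounded)
  moreover have "fixp p (real (f istar) ^ 2 - (real k - real (f istar)) ^ 2)" if "k < n" for k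
    using int_bounded_logit[OF that] f_less istar_less bits(1)
    by (blast intro: fixp_if_int_bounded)
  ultimately show ?thesis
    unfolding Let_def X0_def[symmetric] X1_def[symmetric] X2_def[symmetric] logit_eq by auto
qed

end

section \<open>Choice of the precision\<close>

lemma ex_pow2_between:
  fixes m A :: nat
  assumes "0 < m" and "2 * A \<le> m"
  shows "\<exists>p. 2 ^ p \<le> m \<and> A < 2 ^ p"
proof -
  obtain p where "2 ^ p \<le> m" "m < 2 ^ (p + 1)"
    using ex_power_ivl1[of 2 m] assms(1) by auto
  with assms(2) show ?thesis by auto
qed

lemma entry_bound_bits:
  fixes n :: nat
  assumes "1 \<le> n"
  shows "2 * (256 * (2 * n + 1) ^ 4) \<le> (n + 1) ^ 17"
proof -
  have "2 * (256 * (2 * n + 1) ^ 4) = 2 ^ 9 * (2 * n + 1) ^ 4"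
    by simp
  also have "\<dots> \<le> 2 ^ 9 * (2 * (n + 1)) ^ 4"
    by (intro mult_le_mono2 power_mono) simp_all
  also have "\<dots> = 2 ^ 13 * (n + 1) ^ 4"
    unfolding power_mult_distrib by simp
  also have "\<dots> \<le> (n + 1) ^ 13 * (n + 1) ^ 4"
    using assms by (intro mult_le_mono1 power_mono) simp_all
  also have "\<dots> = (n + 1) ^ 17"
    by (simp flip: power_add)
  finally show ?thesis .
qed

lemma ex_precision:
  assumes "1 \<le> n"
  shows "\<exists>p. 2 ^ p \<le> (n + 1) ^ 17 \<and> 256 * entry_bound n ^ 2 < 2 ^ p"
proof -
  obtain p where p: "2 ^ p \<le> (n + 1) ^ 17" "256 * (2 * n + 1) ^ 4 < 2 ^ p"
    using ex_pow2_between[OF _ entry_bound_bits[OF assms]] by fastforce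
  from p(2) have "real (256 * (2 * n + 1) ^ 4) < real (2 ^ p)"
    by (simp only: of_nat_less_iff)
  then have "256 * entry_bound n ^ 2 < 2 ^ p"
    by (simp add: entry_bound_def add.commute flip: power_mult)
  with p(1) show ?thesis by blast
qed

lemma construction_params_prec:
  assumes prec: "256 * entry_bound n ^ 2 < 2 ^ p"
  shows "(\<forall>x<n. \<forall>r<7. fixp p (tok_emb x r)) \<and> (\<forall>k<2*n+1. \<forall>r<7. fixp p (pos_emb n k r)) \<and>
    attn_params_prec p 7 layer1 \<and> attn_params_prec p 7 layer2 \<and>
    (\<forall>k<n. \<forall>r<7. fixp p (unembed k r))"
proof -
  have "entry_bound n < 2 ^ p" "8 < (2::real) ^ p"
    using entry_bound_less_pow2[OF prec] one_le_entry_bound[of n] by auto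
  then have small: "fixp p x" if "int_bounded (entry_bound n) x" for x
    using that by (blast intro: fixp_if_int_bounded)
  show ?thesis
    using \<open>8 < 2 ^ p\<close> int_weights_layer1 int_weights_layer2
    by (auto intro!: small int_bounded_tok_emb int_bounded_pos_emb int_bounded_unembed
        attn_params_prec_if_int_weights)
qed

theorem theorem9:
  shows "\<exists>C::nat. \<forall>n::nat. n \<ge> 1 \<longrightarrow>
    (\<exists>(w::nat \<Rightarrow> vec) (pe::nat \<Rightarrow> vec) (L1::attn) (L2::attn) (U::mat) (p::nat).
       0 < dh L1 \<and> 0 < dh L2 \<and>
       (2::nat) ^ p \<le> (n + 1) ^ C \<and>
       (\<forall>x<n. \<forall>r<7. fixp p (w x r)) \<and>
       (\<forall>k<2*n+1. \<forall>r<7. fixp p (pe k r)) \<and>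
       attn_params_prec p 7 L1 \<and> attn_params_prec p 7 L2 \<and>
       (\<forall>k<n. \<forall>r<7. fixp p (U k r)) \<and>
       (\<forall>(f::nat \<Rightarrow> nat) (\<pi>::nat \<Rightarrow> nat) (istar::nat).
          (\<forall>x<n. f x < n) \<and> bij_betw \<pi> {..<n} {..<n} \<and> istar < n \<longrightarrow>
          (let N = 2 * n + 1;
               X0 = embed w pe (fe_input n f \<pi> istar);
               X1 = attn_layer 7 L1 True N X0;
               X2 = attn_layer 7 L2 False N X1;
               logit = (\<lambda>k. \<Sum>r<7. U k r * X2 (2 * n) r)
           in (\<forall>k<n. k \<noteq> f istar \<longrightarrow> logit k < logit (f istar)) \<and>
              (\<forall>k<N. \<forall>r<7. fixp p (X0 k r)) \<and>
              attn_comp_prec p 7 L1 True N X0 \<and>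
              attn_comp_prec p 7 L2 False N X1 \<and>
              (\<forall>k<n. fixp p (logit k)))))"
  apply (rule exI[of _ 17], intro allI impI)
  subgoal for n
  proof -
    assume "1 \<le> n"
    then obtain p where "2 ^ p \<le> (n + 1) ^ 17" and prec: "256 * entry_bound n ^ 2 < 2 ^ p"
      using ex_precision by blast
    moreover have "0 < dh layer1" "0 < dh layer2"
      by (simp_all add: layer1_def layer2_def)
    ultimately show ?thesis
      using construction_params_prec[OF prec] function_evaluation_input.transformer_output[OF _ prec]
      unfolding function_evaluation_input_def by blast
  qed
  done

end
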